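(* Every sawed tree $F$ admits a plane drawing $d=(d_1,d_2)$ with $d_2(x)=\mathrm{height}(x)$ for every $x\in F$.
   Context: A finite tree is a finite rooted poset in which each $\downarrow x$ is a chain; $\mathrm{Top}(T)$ is its set of maximal elements and $\mathrm{height}(x)$ is the maximum of $|C|-1$ over chains $C\subseteq\downarrow x$. Let $T$ be a finite tree of height $>0$ all of whose top elements have the same height, with a plane ordering $\prec$ of $\mathrm{Top}(T)$ (a linear order such that each $\uparrow x\cap\mathrm{Top}(T)$ is a $\prec$-interval); enumerate $\mathrm{Top}(T)=\{t_1\prec\cdots\prec t_k\}$. The sawed tree based on $(T,\prec)$ is the poset obtained from $T$ by adding new elements $s_1,\dots,s_{k-1}$ with $t_i<s_i$ and $t_{i+1}<s_i$ for each $i$ (and the relations forced by transitivity). A plane drawing of a poset $G$ is an injection $d=(d_1,d_2)\colon G\to\mathbb R^2$ such that, drawing a straight edge from $d(x)$ to $d(y)$ whenever $y$ is an immediate successor of $x$, $x<y$ implies $d_2(x)<d_2(y)$ and distinct edges meet only at common endpoints. *)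

theory Defs
  imports "HOL-Analysis.Analysis"
begin

definition partial_order_on' :: "'a set \<Rightarrow> ('a \<Rightarrow> 'a \<Rightarrow> bool) \<Rightarrow> bool" where
  "partial_order_on' S le \<longleftrightarrow>
     (\<forall>x\<in>S. le x x) \<and>
     (\<forall>x\<in>S. \<forall>y\<in>S. le x y \<and> le y x \<longrightarrow> x = y) \<and>
     (\<forall>x\<in>S. \<forall>y\<in>S. \<forall>z\<in>S. le x y \<and> le y z \<longrightarrow> le x z)"

definition is_chain :: "('a \<Rightarrow> 'a \<Rightarrow> bool) \<Rightarrow> 'a set \<Rightarrow> bool" where
  "is_chain le C \<longleftrightarrow> (\<forall>a\<in>C. \<forall>b\<in>C. le a b \<or> le b a)"

definition down_set :: "'a set \<Rightarrow> ('a \<Rightarrow> 'a \<Rightarrow> bool) \<Rightarrow> 'a \<Rightarrow> 'a set" where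
  "down_set S le x = {y\<in>S. le y x}"

definition up_set :: "'a set \<Rightarrow> ('a \<Rightarrow> 'a \<Rightarrow> bool) \<Rightarrow> 'a \<Rightarrow> 'a set" where
  "up_set S le x = {y\<in>S. le x y}"

definition finite_tree :: "'a set \<Rightarrow> ('a \<Rightarrow> 'a \<Rightarrow> bool) \<Rightarrow> bool" where
  "finite_tree T le \<longleftrightarrow> finite T \<and> partial_order_on' T le \<and>
     (\<exists>r\<in>T. \<forall>x\<in>T. le r x) \<and>
     (\<forall>x\<in>T. is_chain le (down_set T le x))"

definition Top :: "'a set \<Rightarrow> ('a \<Rightarrow> 'a \<Rightarrow> bool) \<Rightarrow> 'a set" where
  "Top S le = {x\<in>S. \<forall>y\<in>S. le x y \<longrightarrow> y = x}"

definition height :: "'a set \<Rightarrow> ('a \<Rightarrow> 'a \<Rightarrow> bool) \<Rightarrow> 'a \<Rightarrow> nat" where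
  "height S le x = Max {card C - 1 | C. C \<subseteq> down_set S le x \<and> is_chain le C}"

text \<open>Plane ordering of Top(T), given as its enumeration ts = [t_1, ..., t_k]
(a linear order on Top T) such that each up-set meets Top T in an interval.\<close>
definition plane_ordering :: "'a set \<Rightarrow> ('a \<Rightarrow> 'a \<Rightarrow> bool) \<Rightarrow> 'a list \<Rightarrow> bool" where
  "plane_ordering T le ts \<longleftrightarrow> distinct ts \<and> set ts = Top T le \<and>
     (\<forall>x\<in>T. \<forall>i j l. i \<le> j \<and> j \<le> l \<and> l < length ts \<and>
        ts ! i \<in> up_set T le x \<and> ts ! l \<in> up_set T le x \<longrightarrow> ts ! j \<in> up_set T le x)"

text \<open>The sawed tree on 'a + nat: Inl x for x in T, Inr i (i < k - 1) for the new
element s_{i+1}, lying above t_{i+1} = ts!i and t_{i+2} = ts!(i+1) (0-based lists).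
The order is the one generated by T and these relations (transitive closure written out).\<close>
definition sawed_carrier :: "'a set \<Rightarrow> 'a list \<Rightarrow> ('a + nat) set" where
  "sawed_carrier T ts = Inl ` T \<union> Inr ` {..<length ts - 1}"

fun sawed_le :: "('a \<Rightarrow> 'a \<Rightarrow> bool) \<Rightarrow> 'a list \<Rightarrow> 'a + nat \<Rightarrow> 'a + nat \<Rightarrow> bool" where
  "sawed_le le ts (Inl x) (Inl y) = le x y"
| "sawed_le le ts (Inl x) (Inr i) = (le x (ts ! i) \<or> le x (ts ! Suc i))"
| "sawed_le le ts (Inr i) (Inl y) = False"
| "sawed_le le ts (Inr i) (Inr j) = (i = j)"

definition is_sawed_tree_basis :: "'a set \<Rightarrow> ('a \<Rightarrow> 'a \<Rightarrow> bool) \<Rightarrow> 'a list \<Rightarrow> bool" where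
  "is_sawed_tree_basis T le ts \<longleftrightarrow> finite_tree T le \<and>
     (\<exists>x\<in>T. height T le x > 0) \<and>
     (\<forall>t\<in>Top T le. \<forall>t'\<in>Top T le. height T le t = height T le t') \<and>
     plane_ordering T le ts"

definition covers :: "'b set \<Rightarrow> ('b \<Rightarrow> 'b \<Rightarrow> bool) \<Rightarrow> 'b \<Rightarrow> 'b \<Rightarrow> bool" where
  "covers G le x y \<longleftrightarrow> x \<in> G \<and> y \<in> G \<and> le x y \<and> x \<noteq> y \<and>
     \<not> (\<exists>z\<in>G. le x z \<and> x \<noteq> z \<and> le z y \<and> z \<noteq> y)"

definition plane_drawing :: "'b set \<Rightarrow> ('b \<Rightarrow> 'b \<Rightarrow> bool) \<Rightarrow> ('b \<Rightarrow> real \<times> real) \<Rightarrow> bool" where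
  "plane_drawing G le d \<longleftrightarrow> inj_on d G \<and>
     (\<forall>x\<in>G. \<forall>y\<in>G. le x y \<and> x \<noteq> y \<longrightarrow> snd (d x) < snd (d y)) \<and>
     (\<forall>x y u v. covers G le x y \<and> covers G le u v \<and> (x, y) \<noteq> (u, v) \<longrightarrow>
        closed_segment (d x) (d y) \<inter> closed_segment (d u) (d v) \<subseteq> {d x, d y} \<inter> {d u, d v})"

end

theory Submission
  imports Defs
begin

text \<open>Draw every element at its height and give x \<in> T the abscissa j of the leftmost top
element t_j above it; the new element s_i goes to i + 1/2, between its two tops t_i, t_(i+1).
Covering pairs join consecutive levels, so edges can only cross inside a band between
two levels. There the plane ordering does the work: the tops above an element form an
interval of indices, and the intervals of incomparable elements of the same height are
disjoint, so the left-to-right order of the lower endpoints of two edges is inherited by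
their upper endpoints.\<close>

section \<open>Heights in finite posets\<close>

lemma partial_order_on'D:
  assumes "partial_order_on' S le"
  shows partial_order_on'_refl: "x \<in> S \<Longrightarrow> le x x"
    and partial_order_on'_antisym: "\<lbrakk>x \<in> S; y \<in> S; le x y; le y x\<rbrakk> \<Longrightarrow> x = y"
    and partial_order_on'_trans: "\<lbrakk>x \<in> S; y \<in> S; z \<in> S; le x y; le y z\<rbrakk> \<Longrightarrow> le x z"
  using assms unfolding partial_order_on'_def by blast+

lemma finite_down_set: "finite S \<Longrightarrow> finite (down_set S le x)"
  by (simp add: down_set_def)

lemma finite_chain_lengths:
  assumes "finite S"
  shows "finite {card C - 1 | C. C \<subseteq> down_set S le x \<and> is_chain le C}"
proof -
  have "{card C - 1 | C. C \<subseteq> down_set S le x \<and> is_chain le C}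
          \<subseteq> (\<lambda>C. card C - 1) ` Pow (down_set S le x)"
    by auto
  then show ?thesis
    using assms by (meson finite_Pow_iff finite_down_set finite_surj)
qed

lemma chain_lengths_nonempty:
  "{card C - 1 | C. C \<subseteq> down_set S le x \<and> is_chain le C} \<noteq> {}"
  by (auto intro: exI[of _ "{}"] simp: is_chain_def)

lemma height_ge_chain:
  assumes "finite S" "C \<subseteq> down_set S le x" "is_chain le C"
  shows "card C - 1 \<le> height S le x"
  unfolding height_def using finite_chain_lengths[OF assms(1)] assms(2,3)
  by (auto intro!: Max_ge)

lemma height_le_chain_bound:
  assumes "finite S" "\<And>C. C \<subseteq> down_set S le x \<Longrightarrow> is_chain le C \<Longrightarrow> card C - 1 \<le> N"
  shows "height S le x \<le> N"
  unfolding height_def using finite_chain_lengths[OF assms(1)] assms(2)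
  by (subst Max_le_iff) (auto intro: exI[of _ "{}"] simp: is_chain_def)

lemma height_chain_witness:
  assumes "finite S"
  obtains C where "C \<subseteq> down_set S le x" "is_chain le C" "height S le x = card C - 1"
  using Max_in[OF finite_chain_lengths[OF assms] chain_lengths_nonempty] that
  unfolding height_def by auto

lemma height_strict_mono:
  assumes "finite S" "partial_order_on' S le" "x \<in> S" "y \<in> S" "le x y" "x \<noteq> y"
  shows "height S le x < height S le y"
proof -
  note po = partial_order_on'D[OF assms(2)]
  obtain C where C: "C \<subseteq> down_set S le x" "is_chain le C" "height S le x = card C - 1"
    using height_chain_witness[OF assms(1)] .
  have C_below: "c \<in> S" "le c x" "le c y" if "c \<in> C" for c
    using that C(1) po(3)[of c x y] assms(3-5) by (auto simp: down_set_def)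
  let ?C = "insert y (insert x C)"
  have "?C \<subseteq> down_set S le y"
    using C_below po(1) assms(3-5) by (auto simp: down_set_def)
  moreover have "is_chain le ?C"
    using C(2) C_below po(1)[OF assms(3)] po(1)[OF assms(4)] assms(5)
    unfolding is_chain_def by blast
  ultimately have "card ?C - 1 \<le> height S le y"
    by (rule height_ge_chain[OF assms(1)])
  moreover have "y \<notin> insert x C"
    using C_below po(2)[of x y] assms by blast
  moreover have "finite (insert x C)"
    using finite_subset[OF C(1) finite_down_set[OF assms(1)]] by simp
  moreover have "card C \<le> card (insert x C)"
    using card_mono[OF \<open>finite (insert x C)\<close>] by blast
  ultimately show ?thesis
    using C(3) card_gt_0_iff[of "insert x C"] by auto
qed

lemma height_eq_card_down_set:
  assumes "finite S" "is_chain le (down_set S le x)"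
  shows "height S le x = card (down_set S le x) - 1"
proof (rule antisym)
  show "height S le x \<le> card (down_set S le x) - 1"
    using assms(1) by (intro height_le_chain_bound)
      (auto intro: diff_le_mono card_mono finite_down_set)
  show "card (down_set S le x) - 1 \<le> height S le x"
    using height_ge_chain[OF assms(1) _ assms(2)] by simp
qed

lemma card_down_set_pos:
  assumes "finite S" "partial_order_on' S le" "x \<in> S"
  shows "0 < card (down_set S le x)"
  using partial_order_on'_refl[OF assms(2,3)] assms(3) finite_down_set[OF assms(1)]
  by (auto simp: card_gt_0_iff down_set_def)

text \<open>A top element above x: an element of maximal height in the up-set of x.\<close>
lemma Top_above:
  assumes "finite S" "partial_order_on' S le" "x \<in> S"
  obtains t where "t \<in> Top S le" "le x t"
proof -
  let ?A = "up_set S le x"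
  have "x \<in> ?A" "finite ?A"
    using partial_order_on'_refl[OF assms(2,3)] assms by (auto simp: up_set_def)
  then have "Max (height S le ` ?A) \<in> height S le ` ?A"
    by (intro Max_in) auto
  then obtain t where t: "t \<in> S" "le x t" "height S le t = Max (height S le ` ?A)"
    by (auto simp: up_set_def)
  have "y = t" if "y \<in> S" "le t y" for y
  proof (rule ccontr)
    assume "y \<noteq> t"
    have "y \<in> ?A"
      using partial_order_on'_trans[OF assms(2) assms(3) t(1) that(1) t(2) that(2)] that(1)
      by (simp add: up_set_def)
    then have "height S le y \<le> height S le t"
      using t(3) \<open>finite ?A\<close> by simp
    moreover have "height S le t < height S le y"
      using height_strict_mono[OF assms(1,2) t(1) that] \<open>y \<noteq> t\<close> by simp
    ultimately show False
      by simp
  qed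
  then show ?thesis
    using that t(1,2) by (auto simp: Top_def)
qed

lemma down_set_covers:
  assumes "partial_order_on' S le" "is_chain le (down_set S le y)" "covers S le x y"
  shows "down_set S le y = insert y (down_set S le x)"
    and "y \<notin> down_set S le x"
proof -
  note po = partial_order_on'D[OF assms(1)]
  have cov: "x \<in> S" "y \<in> S" "le x y" "x \<noteq> y"
    and between: "\<And>z. z \<in> S \<Longrightarrow> le x z \<Longrightarrow> le z y \<Longrightarrow> z = x \<or> z = y"
    using assms(3) unfolding covers_def by blast+
  show "y \<notin> down_set S le x"
    using po(2)[of x y] cov by (auto simp: down_set_def)
  have "le z x \<or> le x z" if "z \<in> down_set S le y" for z
    using assms(2) that cov unfolding is_chain_def down_set_def by blast
  then show "down_set S le y = insert y (down_set S le x)"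
    using between po(1,3) cov unfolding down_set_def by blast
qed

lemma height_covers:
  assumes "finite_tree S le" "covers S le x y"
  shows "height S le y = Suc (height S le x)"
proof -
  have fin: "finite S" and po: "partial_order_on' S le"
    and chains: "\<And>z. z \<in> S \<Longrightarrow> is_chain le (down_set S le z)"
    using assms(1) unfolding finite_tree_def by blast+
  have xy: "x \<in> S" "y \<in> S"
    using assms(2) unfolding covers_def by blast+
  have "card (down_set S le y) = Suc (card (down_set S le x))"
    using down_set_covers[OF po chains[OF xy(2)] assms(2)] finite_down_set[OF fin] by simp
  then show ?thesis
    using height_eq_card_down_set[OF fin chains] xy card_down_set_pos[OF fin po xy(1)] by simp
qed

section \<open>Drawings with edges between consecutive levels\<close>

lemma closed_segment_unit_rise:
  fixes p q n :: real
  assumes "z \<in> closed_segment (p, n) (q, n + 1)"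
  obtains u where "0 \<le> u" "u \<le> 1" "z = ((1 - u) * p + u * q, n + u)"
proof -
  obtain u where "0 \<le> u" "u \<le> 1" "z = (1 - u) *\<^sub>R (p, n) + u *\<^sub>R (q, n + 1)"
    using assms unfolding in_segment by blast
  then show ?thesis
    using that by (simp add: algebra_simps)
qed

text \<open>Both segments cross the line at height snd z with the same parameter u = snd z - n.\<close>
lemma unit_rise_segments_same_band:
  fixes p p' q q' n :: real
  assumes "z \<in> closed_segment (p, n) (q, n + 1)" "z \<in> closed_segment (p', n) (q', n + 1)"
  obtains u where "0 \<le> u" "u \<le> 1" "(1 - u) * (p' - p) + u * (q' - q) = 0"
    and "z = ((1 - u) * p + u * q, n + u)"
proof -
  obtain u where u: "0 \<le> u" "u \<le> 1" "z = ((1 - u) * p + u * q, n + u)"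
    using closed_segment_unit_rise[OF assms(1)] .
  obtain w where "z = ((1 - w) * p' + w * q', n + w)"
    using closed_segment_unit_rise[OF assms(2)] .
  with u have "(1 - u) * (p' - p) + u * (q' - q) = 0"
    by (auto simp: algebra_simps)
  with u that show ?thesis
    by blast
qed

lemma unit_rise_segments_disjoint:
  fixes p p' q q' n :: real
  assumes "p < p'" "q < q'"
  shows "closed_segment (p, n) (q, n + 1) \<inter> closed_segment (p', n) (q', n + 1) = {}"
proof -
  have False if z: "z \<in> closed_segment (p, n) (q, n + 1)" "z \<in> closed_segment (p', n) (q', n + 1)"
    for z
  proof -
    obtain u where "0 \<le> u" "u \<le> 1" "(1 - u) * (p' - p) + u * (q' - q) = 0"
      and "z = ((1 - u) * p + u * q, n + u)"
      using unit_rise_segments_same_band[OF z] .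
    moreover have "(1 - u) * (p' - p) \<ge> 0" "u * (q' - q) \<ge> 0"
      using calculation(1,2) assms by (simp_all add: mult_nonneg_nonneg)
    ultimately have "(1 - u) * (p' - p) = 0" "u * (q' - q) = 0"
      by linarith+
    then show False
      using assms by simp
  qed
  then show ?thesis
    by blast
qed

lemma unit_rise_segments_common_bottom:
  fixes p q q' n :: real
  assumes "q \<noteq> q'"
  shows "closed_segment (p, n) (q, n + 1) \<inter> closed_segment (p, n) (q', n + 1) \<subseteq> {(p, n)}"
proof (intro subsetI, elim IntE)
  fix z assume z: "z \<in> closed_segment (p, n) (q, n + 1)" "z \<in> closed_segment (p, n) (q', n + 1)"
  obtain u where "0 \<le> u" "u \<le> 1" "(1 - u) * (p - p) + u * (q' - q) = 0"
    and "z = ((1 - u) * p + u * q, n + u)"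
    using unit_rise_segments_same_band[OF z] .
  with assms show "z \<in> {(p, n)}"
    by simp
qed

lemma unit_rise_segments_common_top:
  fixes p p' q n :: real
  assumes "p \<noteq> p'"
  shows "closed_segment (p, n) (q, n + 1) \<inter> closed_segment (p', n) (q, n + 1) \<subseteq> {(q, n + 1)}"
proof (intro subsetI, elim IntE)
  fix z assume z: "z \<in> closed_segment (p, n) (q, n + 1)" "z \<in> closed_segment (p', n) (q, n + 1)"
  obtain u where "0 \<le> u" "u \<le> 1" "(1 - u) * (p' - p) + u * (q - q) = 0"
    and "z = ((1 - u) * p + u * q, n + u)"
    using unit_rise_segments_same_band[OF z] .
  with assms show "z \<in> {(q, n + 1)}"
    by simp
qed

lemma unit_rise_segments_stacked:
  fixes p p' q q' n m :: real
  assumes "n + 1 \<le> m"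
  shows "closed_segment (p, n) (q, n + 1) \<inter> closed_segment (p', m) (q', m + 1)
           \<subseteq> {(q, n + 1)} \<inter> {(p', m)}"
proof
  fix z assume "z \<in> closed_segment (p, n) (q, n + 1) \<inter> closed_segment (p', m) (q', m + 1)"
  then obtain u w where u: "0 \<le> u" "u \<le> 1" "z = ((1 - u) * p + u * q, n + u)"
    and w: "0 \<le> w" "w \<le> 1" "z = ((1 - w) * p' + w * q', m + w)"
    using closed_segment_unit_rise by (metis IntE)
  then have "u = 1" "w = 0" "m = n + 1"
    using assms by auto
  with u w show "z \<in> {(q, n + 1)} \<inter> {(p', m)}"
    by simp
qed

lemma unit_rise_segments_same_band_inter:
  fixes p p' q q' n :: real
  assumes "(p = p' \<and> q \<noteq> q') \<or> (q = q' \<and> p \<noteq> p') \<or> (p < p' \<and> q < q') \<or> (p' < p \<and> q' < q)"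
  shows "closed_segment (p, n) (q, n + 1) \<inter> closed_segment (p', n) (q', n + 1)
           \<subseteq> {(p, n), (q, n + 1)} \<inter> {(p', n), (q', n + 1)}"
  using assms unit_rise_segments_common_bottom[of q q' p n] unit_rise_segments_common_top[of p p' n q]
    unit_rise_segments_disjoint[of p p' q q' n] unit_rise_segments_disjoint[of p' p q' q n]
  by (elim disjE conjE) (auto simp: Int_commute)

lemma levelled_plane_drawing:
  fixes xpos :: "'b \<Rightarrow> real" and h :: "'b \<Rightarrow> nat"
  assumes h_mono: "\<And>x y. \<lbrakk>x \<in> S; y \<in> S; le x y; x \<noteq> y\<rbrakk> \<Longrightarrow> h x < h y"
    and h_covers: "\<And>x y. covers S le x y \<Longrightarrow> h y = Suc (h x)"
    and same_level_inj: "\<And>x y. \<lbrakk>x \<in> S; y \<in> S; h x = h y; xpos x = xpos y\<rbrakk> \<Longrightarrow> x = y"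
    and no_crossing: "\<And>x y u v. \<lbrakk>covers S le x y; covers S le u v; h x = h u\<rbrakk> \<Longrightarrow>
       x = u \<or> y = v \<or> (xpos x < xpos u \<and> xpos y < xpos v) \<or> (xpos u < xpos x \<and> xpos v < xpos y)"
  shows "plane_drawing S le (\<lambda>z. (xpos z, real (h z)))"
  unfolding plane_drawing_def
proof (intro conjI allI impI)
  let ?d = "\<lambda>z. (xpos z, real (h z))"
  show "inj_on ?d S"
    using same_level_inj by (auto simp: inj_on_def)
  show "\<forall>x\<in>S. \<forall>y\<in>S. le x y \<and> x \<noteq> y \<longrightarrow> snd (?d x) < snd (?d y)"
    using h_mono by simp
  fix x y u v
  assume "covers S le x y \<and> covers S le u v \<and> (x, y) \<noteq> (u, v)"
  then have xy: "covers S le x y" and uv: "covers S le u v" and "(x, y) \<noteq> (u, v)"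
    by blast+
  have in_S: "x \<in> S" "y \<in> S" "u \<in> S" "v \<in> S"
    using xy uv by (auto simp: covers_def)
  have d_y: "?d y = (xpos y, real (h x) + 1)" and d_v: "?d v = (xpos v, real (h u) + 1)"
    using h_covers[OF xy] h_covers[OF uv] by simp_all
  let ?I = "closed_segment (?d x) (?d y) \<inter> closed_segment (?d u) (?d v)"
  consider "h x = h u" | "h x < h u" | "h u < h x"
    by linarith
  then show "?I \<subseteq> {?d x, ?d y} \<inter> {?d u, ?d v}"
  proof cases
    case 1
    have "xpos x \<noteq> xpos u" if "x \<noteq> u"
      using same_level_inj in_S 1 that by blast
    moreover have "xpos y \<noteq> xpos v" if "y \<noteq> v"
      using same_level_inj in_S 1 that h_covers[OF xy] h_covers[OF uv] by fastforce
    ultimately have "(xpos x = xpos u \<and> xpos y \<noteq> xpos v) \<or> (xpos y = xpos v \<and> xpos x \<noteq> xpos u)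
        \<or> (xpos x < xpos u \<and> xpos y < xpos v) \<or> (xpos u < xpos x \<and> xpos v < xpos y)"
      using no_crossing[OF xy uv 1] \<open>(x, y) \<noteq> (u, v)\<close> by auto
    then show ?thesis
      using unit_rise_segments_same_band_inter[of "xpos x" "xpos u" "xpos y" "xpos v" "real (h x)"]
        1 d_y d_v by simp
  next
    case 2
    then show ?thesis
      using unit_rise_segments_stacked[of "real (h x)" "real (h u)" "xpos x" "xpos y" "xpos u" "xpos v"]
        d_y d_v
      by auto
  next
    case 3
    then show ?thesis
      using unit_rise_segments_stacked[of "real (h u)" "real (h x)" "xpos u" "xpos v" "xpos x" "xpos y"]
        d_y d_v
      by auto
  qed
qed

section \<open>Drawing the sawed tree\<close>

definition nat_interval :: "nat set \<Rightarrow> bool" where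
  "nat_interval A \<longleftrightarrow> (\<forall>a\<in>A. \<forall>b\<in>A. \<forall>m. a \<le> m \<and> m \<le> b \<longrightarrow> m \<in> A)"

lemma Min_less_Min_of_interval:
  assumes "nat_interval A" "finite A" "finite B" "A \<inter> B = {}" "Min A < Min B"
    and "A' \<subseteq> A" "B' \<subseteq> B" "A' \<noteq> {}" "B' \<noteq> {}"
  shows "Min A' < Min B'"
proof -
  have "Min A' \<in> A" "Min A \<in> A" "Min B \<in> B"
    using assms(2,3,6-9) finite_subset[OF assms(6,2)] Min_in by blast+
  moreover have "Min A \<le> Min A'"
    using Min_antimono[OF assms(6,8,2)] .
  ultimately have "Min A' < Min B"
    using assms(1,4,5) unfolding nat_interval_def by (metis disjoint_iff less_le not_less)
  moreover have "Min B \<le> Min B'"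
    using Min_antimono[OF assms(7,9,3)] .
  ultimately show ?thesis
    by simp
qed

locale sawed_tree_basis =
  fixes T :: "'a set" and le :: "'a \<Rightarrow> 'a \<Rightarrow> bool" and ts :: "'a list"
  assumes finite_tree_T: "finite_tree T le"
    and Top_height_eq: "\<lbrakk>t \<in> Top T le; t' \<in> Top T le\<rbrakk> \<Longrightarrow> height T le t = height T le t'"
    and plane: "plane_ordering T le ts"
begin

abbreviation "F \<equiv> sawed_carrier T ts"
abbreviation "leF \<equiv> sawed_le le ts"
abbreviation "k \<equiv> length ts"

lemma finite_T: "finite T"
  and po_T: "partial_order_on' T le"
  and down_set_chain: "x \<in> T \<Longrightarrow> is_chain le (down_set T le x)"
  using finite_tree_T unfolding finite_tree_def by blast+

lemmas refl_T = partial_order_on'_refl[OF po_T]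
  and antisym_T = partial_order_on'_antisym[OF po_T]
  and trans_T = partial_order_on'_trans[OF po_T]

lemma nth_ts_Top: "i < k \<Longrightarrow> ts ! i \<in> Top T le"
  using plane nth_mem unfolding plane_ordering_def by blast

lemma nth_ts_in_T: "i < k \<Longrightarrow> ts ! i \<in> T"
  using nth_ts_Top unfolding Top_def by blast

lemma nth_ts_maximal: "\<lbrakk>i < k; y \<in> T; le (ts ! i) y\<rbrakk> \<Longrightarrow> y = ts ! i"
  using nth_ts_Top unfolding Top_def by blast

lemma Top_eq_nth_ts:
  assumes "t \<in> Top T le"
  obtains j where "j < k" "t = ts ! j"
  using assms plane unfolding plane_ordering_def by (metis in_set_conv_nth)

lemma le_nth_ts_interval:
  assumes "x \<in> T" "i \<le> j" "j \<le> l" "l < k" "le x (ts ! i)" "le x (ts ! l)"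
  shows "le x (ts ! j)"
proof -
  have "ts ! i \<in> up_set T le x" "ts ! l \<in> up_set T le x"
    using assms nth_ts_in_T[of i] nth_ts_in_T[of l] by (simp_all add: up_set_def)
  then have "ts ! j \<in> up_set T le x"
    using plane assms(1-4) unfolding plane_ordering_def by blast
  then show ?thesis
    by (simp add: up_set_def)
qed

lemma height_nth_ts_eq: "\<lbrakk>i < k; j < k\<rbrakk> \<Longrightarrow> height T le (ts ! i) = height T le (ts ! j)"
  using Top_height_eq nth_ts_Top by blast

lemma height_T_eq_card: "x \<in> T \<Longrightarrow> height T le x = card (down_set T le x) - 1"
  using height_eq_card_down_set[OF finite_T down_set_chain] .

lemma card_down_set_nth_ts_eq:
  assumes "i < k" "j < k"
  shows "card (down_set T le (ts ! i)) = card (down_set T le (ts ! j))"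
  using height_nth_ts_eq[OF assms] height_T_eq_card nth_ts_in_T assms
    card_down_set_pos[OF finite_T po_T nth_ts_in_T[OF assms(1)]]
    card_down_set_pos[OF finite_T po_T nth_ts_in_T[OF assms(2)]]
  by simp

lemma height_below_Top:
  assumes "x \<in> T" "y \<in> T" "le x y" "x \<noteq> y" "j < k"
  shows "height T le x < height T le (ts ! j)"
proof -
  obtain t where t: "t \<in> Top T le" "le y t"
    using Top_above[OF finite_T po_T assms(2)] .
  then obtain l where "l < k" "t = ts ! l"
    using Top_eq_nth_ts by blast
  have "height T le x < height T le y"
    using height_strict_mono[OF finite_T po_T assms(1-4)] .
  also have "\<dots> \<le> height T le t"
    using height_strict_mono[OF finite_T po_T assms(2)] t nth_ts_in_T \<open>l < k\<close> \<open>t = ts ! l\<close>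
    by (cases "y = t") (auto intro: less_imp_le)
  also have "\<dots> = height T le (ts ! j)"
    using height_nth_ts_eq[OF \<open>l < k\<close> assms(5)] \<open>t = ts ! l\<close> by simp
  finally show ?thesis .
qed

lemma finite_F: "finite F"
  using finite_T by (simp add: sawed_carrier_def)

lemma mem_F [simp]: "Inl x \<in> F \<longleftrightarrow> x \<in> T" "Inr i \<in> F \<longleftrightarrow> i < k - 1"
  by (auto simp: sawed_carrier_def)

lemma po_F: "partial_order_on' F leF"
proof -
  have "leF a a" if "a \<in> F" for a
    using that refl_T by (cases a) simp_all
  moreover have "a = b" if "a \<in> F" "b \<in> F" "leF a b" "leF b a" for a b
  proof (cases a; cases b)
    fix x y assume "a = Inl x" "b = Inl y"
    with that show ?thesis
      using antisym_T[of x y] by simp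
  qed (use that in simp_all)
  moreover have "leF a c" if "a \<in> F" "b \<in> F" "c \<in> F" "leF a b" "leF b c" for a b c
  proof (cases a; cases b; cases c)
    fix x y z assume "a = Inl x" "b = Inl y" "c = Inl z"
    with that show ?thesis
      using trans_T[of x y z] by simp
  next
    fix x y i assume "a = Inl x" "b = Inl y" "c = Inr i"
    with that show ?thesis
      using nth_ts_in_T[of i] nth_ts_in_T[of "Suc i"]
        trans_T[of x y "ts ! i"] trans_T[of x y "ts ! Suc i"] by auto
  qed (use that in simp_all)
  ultimately show ?thesis
    unfolding partial_order_on'_def by blast
qed

lemma down_set_F_Inl: "down_set F leF (Inl x) = Inl ` down_set T le x"
proof -
  have "a \<in> down_set F leF (Inl x) \<longleftrightarrow> a \<in> Inl ` down_set T le x" for a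
    by (cases a) (auto simp: down_set_def)
  then show ?thesis
    by blast
qed

lemma height_F_Inl [simp]:
  assumes "x \<in> T"
  shows "height F leF (Inl x) = height T le x"
proof -
  have "is_chain leF (down_set F leF (Inl x))"
    using down_set_chain[OF assms] unfolding down_set_F_Inl is_chain_def by auto
  then have "height F leF (Inl x) = card (down_set F leF (Inl x)) - 1"
    by (rule height_eq_card_down_set[OF finite_F])
  also have "\<dots> = card (down_set T le x) - 1"
    by (simp add: down_set_F_Inl card_image)
  finally show ?thesis
    using height_T_eq_card[OF assms] by simp
qed

lemma height_F_strict_mono: "\<lbrakk>a \<in> F; b \<in> F; leF a b; a \<noteq> b\<rbrakk> \<Longrightarrow> height F leF a < height F leF b"
  using height_strict_mono[OF finite_F po_F] .

lemma chain_below_Inr: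
  assumes "is_chain leF C" "C \<subseteq> down_set F leF (Inr i)" "i < k - 1"
  shows "C \<subseteq> insert (Inr i) (Inl ` down_set T le (ts ! i))
       \<or> C \<subseteq> insert (Inr i) (Inl ` down_set T le (ts ! Suc i))"
proof (rule ccontr)
  have below: "\<exists>a. c = Inl a \<and> a \<in> T \<and> (le a (ts ! i) \<or> le a (ts ! Suc i))"
    if "c \<in> C" "c \<noteq> Inr i" for c
    using assms(2) that unfolding down_set_def by (cases c) auto
  assume "\<not> ?thesis"
  then obtain p q where p: "p \<in> C" "p \<notin> insert (Inr i) (Inl ` down_set T le (ts ! i))"
    and q: "q \<in> C" "q \<notin> insert (Inr i) (Inl ` down_set T le (ts ! Suc i))"
    by blast
  obtain a where a: "p = Inl a" "a \<in> T" "\<not> le a (ts ! i)" "le a (ts ! Suc i)"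
    using below[of p] p by (auto simp: down_set_def)
  obtain b where b: "q = Inl b" "b \<in> T" "le b (ts ! i)" "\<not> le b (ts ! Suc i)"
    using below[of q] q by (auto simp: down_set_def)
  have tops: "ts ! i \<in> T" "ts ! Suc i \<in> T"
    using assms(3) nth_ts_in_T by auto
  have "le a b \<or> le b a"
    using assms(1) p(1) q(1) a(1) b(1) unfolding is_chain_def by force
  then show False
    using trans_T[OF a(2) b(2) tops(1) _ b(3)] trans_T[OF b(2) a(2) tops(2) _ a(4)] a(3) b(4)
    by blast
qed

lemma height_F_Inr:
  assumes i: "i < k - 1"
  shows "height F leF (Inr i) = Suc (height T le (ts ! i))"
proof -
  have tops: "ts ! i \<in> T" "ts ! Suc i \<in> T"
    using i nth_ts_in_T by auto
  define D where "D j = down_set T le (ts ! j)" for j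
  have card_Inr_D: "card (insert (Inr i) (Inl ` D j)) = Suc (card (D j))" for j
    using finite_down_set[OF finite_T] by (simp add: D_def card_image image_iff)
  have card_D_pos: "0 < card (D i)"
    using card_down_set_pos[OF finite_T po_T tops(1)] by (simp add: D_def)
  have "card (D (Suc i)) = card (D i)"
    using card_down_set_nth_ts_eq[of "Suc i" i] i unfolding D_def by simp
  have "height F leF (Inr i) = card (D i)"
  proof (rule antisym)
    show "height F leF (Inr i) \<le> card (D i)"
    proof (rule height_le_chain_bound[OF finite_F])
      fix C assume "C \<subseteq> down_set F leF (Inr i)" "is_chain leF C"
      then have "C \<subseteq> insert (Inr i) (Inl ` D i) \<or> C \<subseteq> insert (Inr i) (Inl ` D (Suc i))"
        using chain_below_Inr i unfolding D_def by blast
      moreover have "finite (insert (Inr i) (Inl ` D j))" for j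
        using finite_down_set[OF finite_T] by (simp add: D_def)
      ultimately have "card C \<le> Suc (card (D i))"
        using card_mono card_Inr_D \<open>card (D (Suc i)) = card (D i)\<close> by metis
      then show "card C - 1 \<le> card (D i)"
        by simp
    qed
    have "insert (Inr i) (Inl ` D i) \<subseteq> down_set F leF (Inr i)"
      using i tops unfolding D_def down_set_def by auto
    moreover have "is_chain leF (insert (Inr i) (Inl ` D i))"
      using down_set_chain[OF tops(1)] unfolding D_def is_chain_def down_set_def by auto
    ultimately have "card (insert (Inr i) (Inl ` D i)) - 1 \<le> height F leF (Inr i)"
      by (rule height_ge_chain[OF finite_F])
    then show "card (D i) \<le> height F leF (Inr i)"
      by (simp only: card_Inr_D diff_Suc_1)
  qed
  then show ?thesis
    using height_T_eq_card[OF tops(1)] card_D_pos unfolding D_def by simp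
qed

lemma covers_F_cases:
  assumes "covers F leF a b"
  obtains (tree) x y where "a = Inl x" "b = Inl y" "covers T le x y"
    | (saw) i j where "a = Inl (ts ! j)" "b = Inr i" "i < k - 1" "j \<in> {i, Suc i}"
proof (cases a; cases b)
  fix x y assume ab: "a = Inl x" "b = Inl y"
  have "covers T le x y"
    using assms unfolding ab covers_def by force
  with ab show ?thesis
    using tree by blast
next
  fix x i assume ab: "a = Inl x" "b = Inr i"
  have cov: "x \<in> T" "i < k - 1" "le x (ts ! i) \<or> le x (ts ! Suc i)"
    and between: "\<not> (\<exists>z\<in>F. leF (Inl x) z \<and> Inl x \<noteq> z \<and> leF z (Inr i) \<and> z \<noteq> Inr i)"
    using assms unfolding ab covers_def by simp_all
  have "ts ! i \<in> T" "ts ! Suc i \<in> T"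
    using cov(2) nth_ts_in_T by auto
  then have top_F: "Inl (ts ! j) \<in> F" "leF (Inl (ts ! j)) (Inr i)" if "j \<in> {i, Suc i}" for j
    using that refl_T by auto
  have "x = ts ! j" if "j \<in> {i, Suc i}" "le x (ts ! j)" for j
  proof (rule ccontr)
    assume "x \<noteq> ts ! j"
    with that top_F[OF that(1)] have "\<exists>z\<in>F. leF (Inl x) z \<and> Inl x \<noteq> z \<and> leF z (Inr i) \<and> z \<noteq> Inr i"
      by (intro bexI[of _ "Inl (ts ! j)"]) simp_all
    with between show False ..
  qed
  then have "x = ts ! i \<or> x = ts ! Suc i"
    using cov(3) by blast
  with ab cov(2) show ?thesis
    using saw by blast
qed (use assms in \<open>auto simp: covers_def\<close>)

lemma height_F_covers:
  assumes "covers F leF a b"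
  shows "height F leF b = Suc (height F leF a)"
  using assms
proof (cases rule: covers_F_cases)
  case (tree x y)
  then have "x \<in> T" "y \<in> T"
    by (auto simp: covers_def)
  with tree show ?thesis
    using height_covers[OF finite_tree_T] by simp
next
  case (saw i j)
  then show ?thesis
    using height_F_Inr height_nth_ts_eq[of i "Suc i"] nth_ts_in_T by auto
qed

definition top_indices :: "'a \<Rightarrow> nat set" where
  "top_indices x = {j. j < k \<and> le x (ts ! j)}"

definition xpos :: "'a + nat \<Rightarrow> real" where
  "xpos z = (case z of Inl x \<Rightarrow> real (Min (top_indices x)) | Inr i \<Rightarrow> real i + 1 / 2)"

lemma finite_top_indices: "finite (top_indices x)"
  by (simp add: top_indices_def)

lemma top_indices_nonempty:
  assumes "x \<in> T"
  shows "top_indices x \<noteq> {}"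
proof -
  obtain t where "t \<in> Top T le" "le x t"
    using Top_above[OF finite_T po_T assms] .
  then show ?thesis
    using Top_eq_nth_ts unfolding top_indices_def by blast
qed

lemma top_indices_nth_ts:
  assumes "j < k"
  shows "top_indices (ts ! j) = {j}"
proof -
  have "l = j" if "l < k" "le (ts ! j) (ts ! l)" for l
    using nth_ts_maximal[OF assms nth_ts_in_T[OF that(1)] that(2)] distinct_conv_nth
      plane assms that(1) unfolding plane_ordering_def by metis
  then show ?thesis
    using assms refl_T nth_ts_in_T unfolding top_indices_def by auto
qed

lemma xpos_nth_ts: "j < k \<Longrightarrow> xpos (Inl (ts ! j)) = real j"
  by (simp add: xpos_def top_indices_nth_ts)

lemma nat_interval_top_indices: "x \<in> T \<Longrightarrow> nat_interval (top_indices x)"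
  unfolding nat_interval_def top_indices_def using le_nth_ts_interval by auto

lemma top_indices_antimono: "\<lbrakk>x \<in> T; y \<in> T; le x y\<rbrakk> \<Longrightarrow> top_indices y \<subseteq> top_indices x"
  unfolding top_indices_def using trans_T nth_ts_in_T by blast

lemma top_indices_disjoint:
  assumes "x \<in> T" "u \<in> T" "\<not> le x u" "\<not> le u x"
  shows "top_indices x \<inter> top_indices u = {}"
proof (rule ccontr)
  assume "top_indices x \<inter> top_indices u \<noteq> {}"
  then obtain j where "j < k" "le x (ts ! j)" "le u (ts ! j)"
    unfolding top_indices_def by auto
  then have "x \<in> down_set T le (ts ! j)" "u \<in> down_set T le (ts ! j)"
    using assms(1,2) by (auto simp: down_set_def)
  then show False
    using down_set_chain[OF nth_ts_in_T[OF \<open>j < k\<close>]] assms(3,4) unfolding is_chain_def by blast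
qed

lemma incomparable_of_height_eq:
  "\<lbrakk>x \<in> T; u \<in> T; height T le x = height T le u; x \<noteq> u\<rbrakk> \<Longrightarrow> \<not> le x u \<and> \<not> le u x"
  using height_strict_mono[OF finite_T po_T, of x u] height_strict_mono[OF finite_T po_T, of u x]
  by auto

lemma xpos_Inl_neq:
  assumes "x \<in> T" "u \<in> T" "\<not> le x u" "\<not> le u x"
  shows "xpos (Inl x) \<noteq> xpos (Inl u)"
  using top_indices_disjoint[OF assms] Min_in[OF finite_top_indices top_indices_nonempty]
    assms(1,2) by (fastforce simp: xpos_def)

lemma xpos_less_lifts:
  assumes "x \<in> T" "u \<in> T" "\<not> le x u" "\<not> le u x"
    and "y \<in> T" "v \<in> T" "le x y" "le u v" "xpos (Inl x) < xpos (Inl u)"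
  shows "xpos (Inl y) < xpos (Inl v)"
  using Min_less_Min_of_interval[OF nat_interval_top_indices[OF assms(1)] finite_top_indices
      finite_top_indices top_indices_disjoint[OF assms(1-4)] _
      top_indices_antimono[OF assms(1,5,7)] top_indices_antimono[OF assms(2,6,8)]
      top_indices_nonempty[OF assms(5)] top_indices_nonempty[OF assms(6)]]
    assms(9) by (simp add: xpos_def)

lemma xpos_tree_edges_ordered:
  assumes "x \<in> T" "u \<in> T" "y \<in> T" "v \<in> T" "le x y" "le u v"
    and "height T le x = height T le u" "x \<noteq> u"
  shows "(xpos (Inl x) < xpos (Inl u) \<and> xpos (Inl y) < xpos (Inl v))
    \<or> (xpos (Inl u) < xpos (Inl x) \<and> xpos (Inl v) < xpos (Inl y))"
proof -
  have incomparable: "\<not> le x u" "\<not> le u x"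
    using incomparable_of_height_eq[OF assms(1,2,7,8)] by auto
  then have "xpos (Inl x) < xpos (Inl u) \<or> xpos (Inl u) < xpos (Inl x)"
    using xpos_Inl_neq[OF assms(1,2)] by linarith
  then show ?thesis
    using xpos_less_lifts[OF assms(1,2) incomparable assms(3,4,5,6)]
      xpos_less_lifts[OF assms(2,1) incomparable(2,1) assms(4,3,6,5)] by blast
qed

lemma xpos_saw_edges_ordered:
  assumes "i < k - 1" "j \<in> {i, Suc i}" "i' < k - 1" "j' \<in> {i', Suc i'}"
  shows "j = j' \<or> i = i'
    \<or> (xpos (Inl (ts ! j)) < xpos (Inl (ts ! j')) \<and> xpos (Inr i) < xpos (Inr i'))
    \<or> (xpos (Inl (ts ! j')) < xpos (Inl (ts ! j)) \<and> xpos (Inr i') < xpos (Inr i))"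
proof -
  have "j < k" "j' < k"
    using assms by auto
  then have "xpos (Inl (ts ! j)) = real j" "xpos (Inl (ts ! j')) = real j'"
    by (simp_all only: xpos_nth_ts)
  moreover have "xpos (Inr i) = real i + 1 / 2" "xpos (Inr i') = real i' + 1 / 2"
    by (simp_all add: xpos_def)
  moreover have "j = j' \<or> i = i' \<or> (j < j' \<and> i < i') \<or> (j' < j \<and> i' < i)"
    using assms(2,4) by auto
  ultimately show ?thesis
    by auto
qed

lemma xpos_no_crossing:
  assumes ab: "covers F leF a b" and uv: "covers F leF a' b'"
    and same_level: "height F leF a = height F leF a'"
  shows "a = a' \<or> b = b' \<or> (xpos a < xpos a' \<and> xpos b < xpos b')
    \<or> (xpos a' < xpos a \<and> xpos b' < xpos b)"
proof -
  have below_Top: False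
    if "covers T le x y" "i < k - 1" "j \<in> {i, Suc i}"
      and "height F leF (Inl x) = height F leF (Inl (ts ! j))" for x y i j
  proof -
    have "x \<in> T" "y \<in> T" "le x y" "x \<noteq> y" "j < k"
      using that(1-3) by (auto simp: covers_def)
    then show False
      using height_below_Top that(4) nth_ts_in_T by fastforce
  qed
  show ?thesis
    using ab
  proof (cases rule: covers_F_cases)
    case (tree x y)
    show ?thesis
      using uv
    proof (cases rule: covers_F_cases)
      case (tree u v)
      with \<open>covers T le x y\<close> have "x \<in> T" "u \<in> T" "y \<in> T" "v \<in> T" "le x y" "le u v"
        by (auto simp: covers_def)
      then show ?thesis
        using xpos_tree_edges_ordered[of x u y v] same_level tree \<open>a = Inl x\<close> \<open>b = Inl y\<close>
        by (cases "x = u") auto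
    qed (use below_Top tree same_level in blast)
  next
    case (saw i j)
    show ?thesis
      using uv
    proof (cases rule: covers_F_cases)
      case (saw i' j')
      then show ?thesis
        using xpos_saw_edges_ordered[of i j i' j'] \<open>a = Inl (ts ! j)\<close> \<open>b = Inr i\<close>
          \<open>i < k - 1\<close> \<open>j \<in> {i, Suc i}\<close> by auto
    qed (use below_Top saw same_level in metis)
  qed
qed

lemma xpos_same_level_inj:
  assumes "a \<in> F" "a' \<in> F" "height F leF a = height F leF a'" "xpos a = xpos a'"
  shows "a = a'"
proof (cases a; cases a')
  fix x u assume "a = Inl x" "a' = Inl u"
  then show ?thesis
    using assms incomparable_of_height_eq[of x u] xpos_Inl_neq[of x u] by auto
next
  fix x i assume "a = Inl x" "a' = Inr i"
  then have "real (2 * Min (top_indices x)) = real (2 * i + 1)"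
    using assms(4) by (simp add: xpos_def)
  then have "2 * Min (top_indices x) = 2 * i + 1"
    by (simp only: of_nat_eq_iff)
  then have False
    by presburger
  then show ?thesis ..
next
  fix i x assume "a = Inr i" "a' = Inl x"
  then have "real (2 * i + 1) = real (2 * Min (top_indices x))"
    using assms(4) by (simp add: xpos_def)
  then have "2 * i + 1 = 2 * Min (top_indices x)"
    by (simp only: of_nat_eq_iff)
  then have False
    by presburger
  then show ?thesis ..
qed (use assms(4) in \<open>simp add: xpos_def\<close>)

lemma plane_drawing_by_height:
  "plane_drawing F leF (\<lambda>z. (xpos z, real (height F leF z)))"
  by (rule levelled_plane_drawing[OF height_F_strict_mono height_F_covers
        xpos_same_level_inj xpos_no_crossing])

end

theorem corollary7p6:
  fixes T :: "'a set" and le :: "'a \<Rightarrow> 'a \<Rightarrow> bool" and ts :: "'a list"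
  assumes "is_sawed_tree_basis T le ts"
  shows "\<exists>d. plane_drawing (sawed_carrier T ts) (sawed_le le ts) d \<and>
           (\<forall>x\<in>sawed_carrier T ts.
              snd (d x) = real (height (sawed_carrier T ts) (sawed_le le ts) x))"
proof -
  interpret sawed_tree_basis T le ts
    using assms unfolding is_sawed_tree_basis_def by unfold_locales blast+
  show ?thesis
    using plane_drawing_by_height by auto
qed

end
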